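(* If $f:\mathbb{R}^{N}\rightarrow [0,\infty ]$ and $\hat{f}=0$, then either $f=0$ or there are $x_{0}\in \mathbb{R}^{N}$ and $0<z\leq \infty$ such that $f(x_0)=z$ and $f(x)=0$ for all $x\neq x_{0}$.
   Context: Enclosing balls: for nonempty bounded $X\subset\mathbb{R}^N$, $\overline{B}_X$ is the unique closed ball of minimal diameter containing $X$; $\overline{B}_X:=\mathbb{R}^N$ if $X$ unbounded; $\overline{B}_\emptyset:=\{0\}$. For $f:\mathbb{R}^N\to[-\infty,\infty]$ and $\xi\in[-\infty,\infty]$, $\rho^+_f(\xi)\in[0,\infty]$ is the radius of $\overline{B}_{\{f>\xi\}}$, $\gamma^+_f(t):=\inf\{\xi:\rho^+_f(\xi)\le t\}$ for $t\in[0,\infty)$, and $\hat f(x):=\gamma^+_f(|x|)$. *)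

theory Defs
  imports "HOL-Analysis.Analysis" "HOL-Library.Extended_Real"
begin

definition enc_radius :: "'a::euclidean_space set \<Rightarrow> ereal" where
  "enc_radius X =
     (if X = {} then 0
      else if \<not> bounded X then \<infinity>
      else ereal (Inf {r. \<exists>c. X \<subseteq> cball c r}))"

definition rho_plus :: "('a::euclidean_space \<Rightarrow> ereal) \<Rightarrow> ereal \<Rightarrow> ereal" where
  "rho_plus f \<xi> = enc_radius {x. f x > \<xi>}"

definition gamma_plus :: "('a::euclidean_space \<Rightarrow> ereal) \<Rightarrow> real \<Rightarrow> ereal" where
  "gamma_plus f t = Inf {\<xi>. rho_plus f \<xi> \<le> ereal t}"

definition fhat :: "('a::euclidean_space \<Rightarrow> ereal) \<Rightarrow> 'a \<Rightarrow> ereal" where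
  "fhat f x = gamma_plus f (norm x)"

end

theory Submission
  imports Defs
begin

text \<open>Since \<open>\<hat>f(0) = 0\<close>, every superlevel set \<open>{f > \<xi>}\<close> with \<open>\<xi> > 0\<close> is contained in a
  superlevel set of enclosing radius \<open>0\<close>, hence has at most one point.\<close>

lemma dist_le_twice_enc_radius:
  fixes X :: "'a::euclidean_space set"
  assumes "a \<in> X" "b \<in> X"
  shows "ereal (dist a b) \<le> 2 * enc_radius X"
proof (cases "bounded X")
  case False
  with assms show ?thesis by (auto simp: enc_radius_def)
next
  case True
  define S where "S = {r. \<exists>c. X \<subseteq> cball c r}"
  obtain c r where "X \<subseteq> cball c r" using True bounded_subset_cball by blast
  then have "S \<noteq> {}" unfolding S_def by blast
  have "dist a b / 2 \<le> Inf S"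
  proof (rule cInf_greatest[OF \<open>S \<noteq> {}\<close>])
    fix r assume "r \<in> S"
    then obtain c where "X \<subseteq> cball c r" unfolding S_def by blast
    then have "dist c a \<le> r" "dist c b \<le> r" using assms by auto
    moreover have "dist a b \<le> dist c a + dist c b" by (metis dist_commute dist_triangle)
    ultimately show "dist a b / 2 \<le> r" by linarith
  qed
  with assms True show ?thesis by (auto simp: enc_radius_def S_def)
qed

lemma enc_radius_le_zero_imp_eq:
  fixes X :: "'a::euclidean_space set"
  assumes "enc_radius X \<le> 0" "a \<in> X" "b \<in> X"
  shows "a = b"
proof -
  have "dist a b \<le> 0"
    using dist_le_twice_enc_radius[OF assms(2,3)] assms(1)
    by (cases "enc_radius X") (auto simp del: dist_le_zero_iff)
  then show ?thesis by simp
qed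

lemma gamma_plus_le_zero_imp_eq:
  fixes f :: "'a::euclidean_space \<Rightarrow> ereal"
  assumes gamma: "gamma_plus f 0 \<le> 0" and "0 < f a" "0 < f b"
  shows "a = b"
proof -
  obtain \<xi> :: real where "0 < \<xi>" "ereal \<xi> < min (f a) (f b)"
    using assms(2,3) by (metis ereal_dense2 less_ereal.simps(1) min_less_iff_conj zero_ereal_def)
  with gamma have "Inf {\<eta>. rho_plus f \<eta> \<le> ereal 0} < ereal \<xi>"
    by (auto simp: gamma_plus_def intro: le_less_trans)
  then obtain \<eta> where "rho_plus f \<eta> \<le> 0" "\<eta> < ereal \<xi>"
    by (auto simp: Inf_less_iff zero_ereal_def)
  moreover have "\<eta> < f a" "\<eta> < f b"
    using \<open>\<eta> < ereal \<xi>\<close> \<open>ereal \<xi> < min (f a) (f b)\<close> by auto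
  ultimately show ?thesis
    using enc_radius_le_zero_imp_eq[of "{x. f x > \<eta>}" a b] by (simp add: rho_plus_def)
qed

theorem lemma12:
  fixes f :: "'a::euclidean_space \<Rightarrow> ereal"
  assumes nonneg: "\<And>x. f x \<ge> 0"
    and hat0: "\<And>x. fhat f x = 0"
  shows "(\<forall>x. f x = 0) \<or>
         (\<exists>x0 z. 0 < z \<and> f x0 = z \<and> (\<forall>x. x \<noteq> x0 \<longrightarrow> f x = 0))"
proof (cases "\<exists>x0. f x0 > 0")
  case False
  with nonneg show ?thesis by (metis order.not_eq_order_implies_strict)
next
  case True
  then obtain x0 where "f x0 > 0" by blast
  have "gamma_plus f 0 \<le> 0" using hat0[of 0] by (simp add: fhat_def)
  with \<open>f x0 > 0\<close> nonneg have "\<forall>x. x \<noteq> x0 \<longrightarrow> f x = 0"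
    by (metis gamma_plus_le_zero_imp_eq order.not_eq_order_implies_strict)
  with \<open>f x0 > 0\<close> show ?thesis by blast
qed

end
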